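(* Let $A$ be a commutative ring with $1$, $M\in\operatorname{Sym}_n(A)$ and $a\in(\Sigma(M):A^n)$. Then $b^2\in(\Sigma(M):A^n)$ for every $b\in\Sigma(a)$.
   Context: $\Sigma A^2$ denotes the set of finite sums of squares in $A$. A matrix $N\in\operatorname{Sym}_n(A)$ is a sum of squares if $N=\sum_{i=1}^m w_iw_i^{t}$ for some column vectors $w_i\in A^n$. For $M\in\operatorname{Sym}_n(A)$, $\Sigma(M)$ is the set of $v\in A^n$ such that $sM=vv^{t}+N$ for some $s\in\Sigma A^2$ and some sum of squares $N\in\operatorname{Sym}_n(A)$; it is an $A$-submodule of $A^n$. For $n=1$: $b\in\Sigma(a)$ iff $sa=b^2+t$ for some $s,t\in\Sigma A^2$. $(\Sigma(M):A^n)=\{c\in A: cv\in\Sigma(M)\text{ for all }v\in A^n\}$. *)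

theory Defs
  imports "HOL-Analysis.Finite_Cartesian_Product"
begin

definition sos :: "'a::comm_ring_1 set" where
  "sos = {s. \<exists>l :: 'a list. s = sum_list (map (\<lambda>x. x * x) l)}"

definition sym_mat :: "'a::comm_ring_1 ^ 'n::finite ^ 'n \<Rightarrow> bool" where
  "sym_mat M \<longleftrightarrow> (\<forall>i j. M $ i $ j = M $ j $ i)"

definition outer :: "'a::comm_ring_1 ^ 'n::finite \<Rightarrow> 'a ^ 'n ^ 'n" where
  "outer v = (\<chi> i j. v $ i * v $ j)"

definition sos_mat :: "'a::comm_ring_1 ^ 'n::finite ^ 'n \<Rightarrow> bool" where
  "sos_mat N \<longleftrightarrow> (\<exists>ws :: ('a ^ 'n) list. N = sum_list (map outer ws))"

definition smult_mat :: "'a::comm_ring_1 \<Rightarrow> 'a ^ 'n::finite ^ 'n \<Rightarrow> 'a ^ 'n ^ 'n" where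
  "smult_mat s M = (\<chi> i j. s * M $ i $ j)"

definition smult_vec :: "'a::comm_ring_1 \<Rightarrow> 'a ^ 'n::finite \<Rightarrow> 'a ^ 'n" where
  "smult_vec c v = (\<chi> i. c * v $ i)"

definition Sigma_mat :: "'a::comm_ring_1 ^ 'n::finite ^ 'n \<Rightarrow> ('a ^ 'n) set" where
  "Sigma_mat M = {v. \<exists>s N. s \<in> sos \<and> sos_mat N \<and> smult_mat s M = outer v + N}"

text \<open>The case n = 1: b in Sigma(a) iff s a = b^2 + t with s, t in sos.\<close>
definition Sigma_elt :: "'a::comm_ring_1 \<Rightarrow> 'a set" where
  "Sigma_elt a = {b. \<exists>s t. s \<in> sos \<and> t \<in> sos \<and> s * a = b\<^sup>2 + t}"

definition Sigma_colon :: "'a::comm_ring_1 ^ 'n::finite ^ 'n \<Rightarrow> 'a set" where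
  "Sigma_colon M = {c. \<forall>v :: 'a ^ 'n. smult_vec c v \<in> Sigma_mat M}"

end

theory Submission
  imports Defs
begin

text \<open>
  If \<open>s a = b\<^sup>2 + t\<close> then \<open>s\<^sup>2 a\<^sup>2 = b\<^sup>4 + (2 b\<^sup>2 t + t\<^sup>2)\<close>, so \<open>b\<^sup>2 \<in> \<Sigma>(a\<^sup>2)\<close>.
  For any \<open>v\<close>, \<open>a v \<in> \<Sigma>(M)\<close> gives \<open>s\<^sub>1 M = a\<^sup>2 v v\<^sup>t + N\<close>; multiplying by
  \<open>s\<^sup>2\<close> and substituting for \<open>s\<^sup>2 a\<^sup>2\<close> exhibits \<open>b\<^sup>2 v \<in> \<Sigma>(M)\<close>.
\<close>

lemma sos_sq: "x * x \<in> sos"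
  unfolding sos_def by (rule CollectI, rule exI[of _ "[x]"]) simp

lemma sos_add:
  assumes "s \<in> sos" "t \<in> sos"
  shows "s + t \<in> sos"
proof -
  obtain l1 l2 where "s = sum_list (map (\<lambda>x. x * x) l1)" "t = sum_list (map (\<lambda>x. x * x) l2)"
    using assms unfolding sos_def by blast
  then have "s + t = sum_list (map (\<lambda>x. x * x) (l1 @ l2))" by simp
  then show ?thesis unfolding sos_def by blast
qed

lemma sum_squares_mult:
  fixes l1 l2 :: "'a::comm_ring_1 list"
  shows "sum_list (map (\<lambda>x. x * x) l1) * sum_list (map (\<lambda>x. x * x) l2)
         = sum_list (map (\<lambda>x. x * x) [x * y. x \<leftarrow> l1, y \<leftarrow> l2])"
proof (induction l1)
  case (Cons x l1)
  have "x * x * sum_list (map (\<lambda>y. y * y) l2) = sum_list (map (\<lambda>y. x * y * (x * y)) l2)"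
    by (induction l2) (simp_all add: distrib_left mult_ac)
  with Cons show ?case by (simp add: distrib_right o_def)
qed simp

lemma sos_mult: "s \<in> sos \<Longrightarrow> t \<in> sos \<Longrightarrow> s * t \<in> sos"
  unfolding sos_def using sum_squares_mult by blast

lemma Sigma_elt_mult:
  assumes "b \<in> Sigma_elt a" "d \<in> Sigma_elt c"
  shows "b * d \<in> Sigma_elt (a * c)"
proof -
  obtain s t where st: "s \<in> sos" "t \<in> sos" "s * a = b\<^sup>2 + t"
    using assms(1) unfolding Sigma_elt_def by blast
  obtain s' t' where st': "s' \<in> sos" "t' \<in> sos" "s' * c = d\<^sup>2 + t'"
    using assms(2) unfolding Sigma_elt_def by blast
  have "(s * s') * (a * c) = (s * a) * (s' * c)" by (simp add: mult_ac)
  also have "\<dots> = (b * d)\<^sup>2 + (b * b * t' + t * (d * d) + t * t')"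
    unfolding st(3) st'(3) by (simp add: power2_eq_square algebra_simps)
  finally have "(s * s') * (a * c) = (b * d)\<^sup>2 + (b * b * t' + t * (d * d) + t * t')" .
  moreover have "b * b * t' + t * (d * d) + t * t' \<in> sos"
    by (intro sos_add sos_mult sos_sq st st')
  moreover have "s * s' \<in> sos" by (intro sos_mult st st')
  ultimately show ?thesis unfolding Sigma_elt_def by blast
qed

lemma smult_mat_add: "smult_mat c (N1 + N2) = smult_mat c N1 + smult_mat c N2"
  unfolding smult_mat_def by (simp add: vec_eq_iff distrib_left)

lemma smult_mat_add_left: "smult_mat (c + d) N = smult_mat c N + smult_mat d N"
  unfolding smult_mat_def by (simp add: vec_eq_iff distrib_right)

lemma smult_mat_zero: "smult_mat 0 N = 0" "smult_mat c 0 = 0"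
  unfolding smult_mat_def by (simp_all add: vec_eq_iff)

lemma smult_mat_smult_mat: "smult_mat c (smult_mat d N) = smult_mat (c * d) N"
  unfolding smult_mat_def by (simp add: vec_eq_iff mult_ac)

lemma smult_mat_sum_list: "smult_mat c (sum_list Ns) = sum_list (map (smult_mat c) Ns)"
  by (induction Ns) (simp_all add: smult_mat_zero smult_mat_add)

lemma outer_smult_vec: "outer (smult_vec x w) = smult_mat (x * x) (outer w)"
  unfolding outer_def smult_vec_def smult_mat_def by (simp add: vec_eq_iff mult_ac)

lemma sos_mat_zero: "sos_mat 0"
  unfolding sos_mat_def by (rule exI[of _ "[]"]) simp

lemma sos_mat_outer: "sos_mat (outer v)"
  unfolding sos_mat_def by (rule exI[of _ "[v]"]) simp

lemma sos_mat_add: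
  assumes "sos_mat N1" "sos_mat N2"
  shows "sos_mat (N1 + N2)"
proof -
  obtain l1 l2 where "N1 = sum_list (map outer l1)" "N2 = sum_list (map outer l2)"
    using assms unfolding sos_mat_def by blast
  then have "N1 + N2 = sum_list (map outer (l1 @ l2))" by simp
  then show ?thesis unfolding sos_mat_def by blast
qed

lemma sos_mat_smult_square:
  assumes "sos_mat N"
  shows "sos_mat (smult_mat (x * x) N)"
proof -
  obtain ws where "N = sum_list (map outer ws)"
    using assms unfolding sos_mat_def by blast
  then have "smult_mat (x * x) N = sum_list (map outer (map (smult_vec x) ws))"
    by (simp add: smult_mat_sum_list o_def outer_smult_vec)
  then show ?thesis unfolding sos_mat_def by blast
qed

lemma sos_mat_smult:
  assumes "s \<in> sos" "sos_mat N"
  shows "sos_mat (smult_mat s N)"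
proof -
  obtain l where "s = sum_list (map (\<lambda>x. x * x) l)"
    using assms(1) unfolding sos_def by blast
  moreover have "sos_mat (smult_mat (sum_list (map (\<lambda>x. x * x) l)) N)"
    by (induction l)
      (simp_all add: smult_mat_zero sos_mat_zero smult_mat_add_left sos_mat_add
        sos_mat_smult_square assms(2))
  ultimately show ?thesis by simp
qed

lemma smult_vec_in_Sigma_mat:
  assumes "smult_vec x v \<in> Sigma_mat M" "y \<in> Sigma_elt (x * x)"
  shows "smult_vec y v \<in> Sigma_mat M"
proof -
  obtain s1 N where s1N: "s1 \<in> sos" "sos_mat N" "smult_mat s1 M = outer (smult_vec x v) + N"
    using assms(1) unfolding Sigma_mat_def by blast
  obtain s t where st: "s \<in> sos" "t \<in> sos" "s * (x * x) = y\<^sup>2 + t"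
    using assms(2) unfolding Sigma_elt_def by blast
  have "smult_mat (s * s1) M = smult_mat (s * (x * x)) (outer v) + smult_mat s N"
    by (simp add: s1N(3) smult_mat_add outer_smult_vec smult_mat_smult_mat flip: smult_mat_smult_mat)
  also have "\<dots> = outer (smult_vec y v) + (smult_mat t (outer v) + smult_mat s N)"
    by (simp add: st(3) power2_eq_square smult_mat_add_left outer_smult_vec add.assoc)
  finally have "smult_mat (s * s1) M = outer (smult_vec y v) + (smult_mat t (outer v) + smult_mat s N)" .
  moreover have "sos_mat (smult_mat t (outer v) + smult_mat s N)"
    by (intro sos_mat_add sos_mat_smult sos_mat_outer st s1N)
  moreover have "s * s1 \<in> sos" by (intro sos_mult st s1N)
  ultimately show ?thesis unfolding Sigma_mat_def by blast
qed

theorem corollary3p10: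
  fixes M :: "'a::comm_ring_1 ^ 'n::finite ^ 'n" and a :: 'a
  assumes "sym_mat M"
    and "a \<in> Sigma_colon M"
  shows "\<forall>b \<in> Sigma_elt a. b\<^sup>2 \<in> Sigma_colon M"
proof
  fix b assume b: "b \<in> Sigma_elt a"
  have "b\<^sup>2 \<in> Sigma_elt (a * a)"
    using Sigma_elt_mult[OF b b] by (simp add: power2_eq_square)
  with assms(2) show "b\<^sup>2 \<in> Sigma_colon M"
    unfolding Sigma_colon_def by (blast intro: smult_vec_in_Sigma_mat)
qed

end
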